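(* Let $d\ge2$, $n\ge1$, $\gamma$ a positive conductivity on the lattice graph below, and $d-1\le t\le dn-1$. Then the only vector in $\mathbb R^{E_t}$ orthogonal (for the standard inner product) to every $\mathbf J_p^{\mathbf u}$ with $\mathbf u\in\mathcal U^{(t)}$ and $p\in L_t\cup L_{t+1}\cup J_t$ is the zero vector; i.e. $\operatorname{span}\{\mathbf J_p^{\mathbf u}:\mathbf u\in\mathcal U^{(t)},\ p\in L_t\cup L_{t+1}\cup J_t\}^\perp=\{0\}$.
   Context: Lattice: $D=\{x\in\mathbb Z^d:1\le x_i\le n\ \forall i\}$, $\partial D=\{p\in\mathbb Z^d:\min_{q\in D}\|q-p\|_{\ell^1}=1\}$; $E$ = unordered pairs $pq\subseteq D\cup\partial D$ with $\|p-q\|_{\ell^1}=1$, not both in $\partial D$; $\mathcal N(p)=\{q:pq\in E\}$. Conductivity $\gamma:E\to(0,\infty)$, symmetric. $S_\gamma\varphi$ is the unique $\mathbf u\in\mathbb R^{D\cup\partial D}$ with $\sum_{q\in\mathcal N(p)}\gamma_{pq}(\mathbf u_q-\mathbf u_p)=0$ for all $p\in D$ and $\mathbf u=\varphi$ on $\partial D$. Functions on subsets are extended by zero. With $s(x)=\sum_ix_i$: $L_t=\{x\in D:s(x)=t\}$, $L_t^{\mathcal S}=\{x\in D:s(x)\le t\}$, $K_t^+=\{x\in\partial D:s(x)=t,\max_ix_i=n+1\}$, $K_t^-=\{x\in\partial D:s(x)=t,\min_ix_i=0\}$, $K_t^{\mathcal S\pm}=\bigcup_{\ell\le t}K_\ell^\pm$,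 $J_t=K_t^-\cup K_{t+1}^+$, $J_t^{\mathcal S}=K_t^{\mathcal S-}\cup K_{t+1}^{\mathcal S+}$. $T_1^{(t)}:\mathbb R^{J_t^{\mathcal S}}\to\mathbb R^{L_{t+1}}$, $\varphi\mapsto(S_\gamma\varphi)|_{L_{t+1}}$, and $\mathcal U^{(t)}=\{(S_\gamma\varphi)|_{J_t^{\mathcal S}\cup L_t^{\mathcal S}}:\varphi\in\ker T_1^{(t)}\}$; elements of $\mathcal U^{(t)}$ are extended by zero to $D\cup\partial D$. $E_t\subseteq E$ is the set of edges joining $K_t^-$ to $L_{t+1}$, $L_t$ to $K_{t+1}^+$, or $L_t$ to $L_{t+1}$. For a node $p$ and $\mathbf u\in\mathcal U^{(t)}$, $\mathbf J_p^{\mathbf u}\in\mathbb R^{E_t}$ is given by $\mathbf J_p^{\mathbf u}(e)=\mathbf u_p-\mathbf u_q$ if $e=pq\in E_t$ is incident to $p$, and $\mathbf J_p^{\mathbf u}(e)=0$ otherwise. *)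

theory Defs
  imports Complex_Main
begin

(* Lattice points in Z^d are represented as integer lists of length d. *)

definition l1dist :: "int list \<Rightarrow> int list \<Rightarrow> int" where
  "l1dist p q = (\<Sum>i<length p. \<bar>p ! i - q ! i\<bar>)"

definition dom_D :: "nat \<Rightarrow> nat \<Rightarrow> int list set" where
  "dom_D d n = {x. length x = d \<and> (\<forall>i<d. 1 \<le> x ! i \<and> x ! i \<le> int n)}"

(* min_{q in D} ||q - p||_1 = 1 : p is not in D (distance 0) and some q in D is at distance 1 *)
definition bdry_D :: "nat \<Rightarrow> nat \<Rightarrow> int list set" where
  "bdry_D d n = {p. length p = d \<and> p \<notin> dom_D d n \<and> (\<exists>q\<in>dom_D d n. l1dist q p = 1)}"

definition nodes :: "nat \<Rightarrow> nat \<Rightarrow> int list set" where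
  "nodes d n = dom_D d n \<union> bdry_D d n"

definition edges :: "nat \<Rightarrow> nat \<Rightarrow> int list set set" where
  "edges d n = {{p, q} | p q. p \<in> nodes d n \<and> q \<in> nodes d n \<and> l1dist p q = 1
                 \<and> \<not> (p \<in> bdry_D d n \<and> q \<in> bdry_D d n)}"

definition nbrs :: "nat \<Rightarrow> nat \<Rightarrow> int list \<Rightarrow> int list set" where
  "nbrs d n p = {q. {p, q} \<in> edges d n}"

(* u solves the Dirichlet problem with conductivity gamma and boundary data phi;
   u is a function on D \<union> \<partial>D, represented as zero outside the nodes *)
definition is_dirichlet_sol ::
  "nat \<Rightarrow> nat \<Rightarrow> (int list set \<Rightarrow> real) \<Rightarrow> (int list \<Rightarrow> real) \<Rightarrow> (int list \<Rightarrow> real) \<Rightarrow> bool" where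
  "is_dirichlet_sol d n \<gamma> \<phi> u \<longleftrightarrow>
     (\<forall>p\<in>dom_D d n. (\<Sum>q\<in>nbrs d n p. \<gamma> {p, q} * (u q - u p)) = 0)
   \<and> (\<forall>p\<in>bdry_D d n. u p = \<phi> p)
   \<and> (\<forall>p. p \<notin> nodes d n \<longrightarrow> u p = 0)"

definition S_gamma ::
  "nat \<Rightarrow> nat \<Rightarrow> (int list set \<Rightarrow> real) \<Rightarrow> (int list \<Rightarrow> real) \<Rightarrow> (int list \<Rightarrow> real)" where
  "S_gamma d n \<gamma> \<phi> = (THE u. is_dirichlet_sol d n \<gamma> \<phi> u)"

definition ssum :: "int list \<Rightarrow> int" where
  "ssum x = sum_list x"

definition Lset :: "nat \<Rightarrow> nat \<Rightarrow> int \<Rightarrow> int list set" where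
  "Lset d n t = {x \<in> dom_D d n. ssum x = t}"

definition LSset :: "nat \<Rightarrow> nat \<Rightarrow> int \<Rightarrow> int list set" where
  "LSset d n t = {x \<in> dom_D d n. ssum x \<le> t}"

definition Kplus :: "nat \<Rightarrow> nat \<Rightarrow> int \<Rightarrow> int list set" where
  "Kplus d n t = {x \<in> bdry_D d n. ssum x = t \<and> Max (set x) = int n + 1}"

definition Kminus :: "nat \<Rightarrow> nat \<Rightarrow> int \<Rightarrow> int list set" where
  "Kminus d n t = {x \<in> bdry_D d n. ssum x = t \<and> Min (set x) = 0}"

definition KSplus :: "nat \<Rightarrow> nat \<Rightarrow> int \<Rightarrow> int list set" where
  "KSplus d n t = (\<Union>l\<in>{l. l \<le> t}. Kplus d n l)"

definition KSminus :: "nat \<Rightarrow> nat \<Rightarrow> int \<Rightarrow> int list set" where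
  "KSminus d n t = (\<Union>l\<in>{l. l \<le> t}. Kminus d n l)"

definition Jset :: "nat \<Rightarrow> nat \<Rightarrow> int \<Rightarrow> int list set" where
  "Jset d n t = Kminus d n t \<union> Kplus d n (t + 1)"

definition JSset :: "nat \<Rightarrow> nat \<Rightarrow> int \<Rightarrow> int list set" where
  "JSset d n t = KSminus d n t \<union> KSplus d n (t + 1)"

(* ker T_1^{(t)}: phi in R^{J_t^S} (extended by zero) with (S_gamma phi)|_{L_{t+1}} = 0 *)
definition kerT1 :: "nat \<Rightarrow> nat \<Rightarrow> (int list set \<Rightarrow> real) \<Rightarrow> int \<Rightarrow> (int list \<Rightarrow> real) set" where
  "kerT1 d n \<gamma> t = {\<phi>. (\<forall>x. x \<notin> JSset d n t \<longrightarrow> \<phi> x = 0)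
                        \<and> (\<forall>x\<in>Lset d n (t + 1). S_gamma d n \<gamma> \<phi> x = 0)}"

(* U^{(t)}, elements extended by zero to the whole lattice *)
definition Uset :: "nat \<Rightarrow> nat \<Rightarrow> (int list set \<Rightarrow> real) \<Rightarrow> int \<Rightarrow> (int list \<Rightarrow> real) set" where
  "Uset d n \<gamma> t = {(\<lambda>x. if x \<in> JSset d n t \<union> LSset d n t then S_gamma d n \<gamma> \<phi> x else 0)
                     | \<phi>. \<phi> \<in> kerT1 d n \<gamma> t}"

definition Et :: "nat \<Rightarrow> nat \<Rightarrow> int \<Rightarrow> int list set set" where
  "Et d n t = {e \<in> edges d n. \<exists>p q. e = {p, q} \<and>
       ((p \<in> Kminus d n t \<and> q \<in> Lset d n (t + 1))
      \<or> (p \<in> Lset d n t \<and> q \<in> Kplus d n (t + 1))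
      \<or> (p \<in> Lset d n t \<and> q \<in> Lset d n (t + 1)))}"

definition Jvec :: "nat \<Rightarrow> nat \<Rightarrow> int \<Rightarrow> int list \<Rightarrow> (int list \<Rightarrow> real) \<Rightarrow> int list set \<Rightarrow> real" where
  "Jvec d n t p u e = (if e \<in> Et d n t \<and> p \<in> e then u p - u (the_elem (e - {p})) else 0)"

end

theory Submission
  imports Defs "HOL-Library.Product_Lexorder"
begin

text \<open>Every edge of \<open>E\<^sub>t\<close> joins a node of level \<open>t\<close> (in \<open>L\<^sub>t \<union> K\<^sub>t\<^sup>-\<close>) to a node of level
  \<open>t + 1\<close> (in \<open>L\<^sub>t\<^sub>+\<^sub>1 \<union> K\<^sub>t\<^sub>+\<^sub>1\<^sup>+\<close>), and \<open>w\<close> is tested against \<open>J\<^sub>p\<^sup>u\<close> for well chosen \<open>u \<in> U\<^sup>(\<^sup>t\<^sup>)\<close>.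
  Such a \<open>u\<close> is built around a node \<open>q \<in> L\<^sub>t\<^sub>+\<^sub>1\<close>: prescribe values on the lower neighbours
  \<open>q - e\<^sub>i\<close> and on \<open>K\<^sub>t\<^sub>+\<^sub>1\<^sup>+\<close>, balanced so that \<open>u\<close> is harmonic at \<open>q\<close>, put \<open>u = 0\<close> on the
  interior nodes of level \<open>\<ge> t + 1\<close>, and determine the remaining values below by solving the
  harmonicity equations one at a time, each for the value at a lower neighbour, in an order
  that makes the system triangular. By the maximum principle the Dirichlet problem has a
  unique solution, so this \<open>u\<close> lies in \<open>U\<^sup>(\<^sup>t\<^sup>)\<close>.

  A unit value at a node of \<open>K\<^sub>t\<^sub>+\<^sub>1\<^sup>+\<close> shows that \<open>w\<close> vanishes on the edges at \<open>K\<^sub>t\<^sub>+\<^sub>1\<^sup>+\<close>.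
  A dipole on \<open>q - e\<^sub>i\<close>, \<open>q - e\<^sub>j\<close> shows that \<open>w{q - e\<^sub>i, q} / \<gamma>{q, q - e\<^sub>i}\<close> does not depend
  on \<open>i\<close>, and that the values of \<open>w\<close> on the upward edges at \<open>q - e\<^sub>i\<close> sum to zero. An
  induction on the first coordinate of \<open>q\<close> then makes \<open>w\<close> vanish on every edge into
  \<open>L\<^sub>t\<^sub>+\<^sub>1\<close>.\<close>

section \<open>Lattice moves\<close>

definition shift :: "int list \<Rightarrow> nat \<Rightarrow> int \<Rightarrow> int list" where
  "shift x i c = x[i := x ! i + c]"

lemma length_shift [simp]: "length (shift x i c) = length x"
  by (simp add: shift_def)

lemma nth_shift: "j < length x \<Longrightarrow> shift x i c ! j = x ! j + (if j = i then c else 0)"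
  by (auto simp: shift_def nth_list_update)

lemma shift_0 [simp]: "shift x i 0 = x"
  by (simp add: shift_def)

lemma shift_shift [simp]: "i < length x \<Longrightarrow> shift (shift x i c) i c' = shift x i (c + c')"
  by (simp add: shift_def add.assoc)

lemma shift_eq_iff: "i < length x \<Longrightarrow> shift x i c = y \<longleftrightarrow> x = shift y i (- c)"
  by auto

lemma sum_list_update_int:
  "k < length xs \<Longrightarrow> sum_list (xs[k := x]) = sum_list xs + x - (xs ! k :: int)"
proof (induction xs arbitrary: k)
  case (Cons a xs)
  then show ?case by (cases k) auto
qed simp

lemma ssum_shift [simp]: "i < length x \<Longrightarrow> ssum (shift x i c) = ssum x + c"
  by (simp add: ssum_def shift_def sum_list_update_int)

lemma l1dist_commute: "length p = length q \<Longrightarrow> l1dist p q = l1dist q p"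
  unfolding l1dist_def by (intro sum.cong) auto

lemma l1dist_shift:
  assumes "i < length x"
  shows "l1dist x (shift x i c) = \<bar>c\<bar>"
proof -
  have "l1dist x (shift x i c) = (\<Sum>j<length x. if j = i then \<bar>c\<bar> else 0)"
    unfolding l1dist_def by (intro sum.cong) (auto simp: nth_shift)
  then show ?thesis using assms by simp
qed

lemma l1dist_eq_1_imp_shift:
  assumes len: "length q = length p" and dist: "l1dist p q = 1"
  shows "\<exists>i<length p. \<exists>c\<in>{-1, 1}. q = shift p i c"
proof -
  define f where "f j = \<bar>q ! j - p ! j\<bar>" for j
  have sum_f: "sum f {..<length p} = 1"
    using dist unfolding l1dist_def f_def by (simp add: abs_minus_commute)
  have f_nonneg: "0 \<le> f j" for j
    unfolding f_def by simp
  obtain i where i: "i < length p" "f i \<noteq> 0"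
    using sum_f by (metis lessThan_iff sum.neutral zero_neq_one)
  have "f i \<le> 1"
    using member_le_sum[of i "{..<length p}" f] i f_nonneg sum_f by simp
  then have fi: "f i = 1"
    using i f_nonneg[of i] by (simp add: f_def)
  have fj: "f j = 0" if "j < length p" "j \<noteq> i" for j
  proof -
    have "sum f {i, j} \<le> 1"
      using sum_mono2[of "{..<length p}" "{i, j}" f] i that f_nonneg sum_f by simp
    then show ?thesis using fi f_nonneg[of j] that by simp
  qed
  define c where "c = q ! i - p ! i"
  have "q = shift p i c"
    by (rule nth_equalityI) (use len fj in \<open>auto simp: nth_shift c_def f_def\<close>)
  moreover have "c \<in> {-1, 1}"
    using fi unfolding f_def c_def by auto
  ultimately show ?thesis using i by blast
qed

section \<open>Triangular systems\<close>

text \<open>Solve the equations in order of increasing rank, each time choosing the value of the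
  pivot variable of the new equation: by independence this does not disturb the equations
  already solved.\<close>

lemma triangular_system_solvable:
  fixes X :: "'a set" and pivot :: "'a \<Rightarrow> 'b" and rank :: "'a \<Rightarrow> 'c::linorder"
    and F :: "'a \<Rightarrow> ('b \<Rightarrow> 'f::field) \<Rightarrow> 'f"
  assumes "finite X"
    and affine: "\<And>x g. x \<in> X \<Longrightarrow> \<exists>a b. a \<noteq> 0 \<and> (\<forall>v. F x (g(pivot x := v)) = a * v + b)"
    and independent: "\<And>x x' g v. x \<in> X \<Longrightarrow> x' \<in> X \<Longrightarrow> x' \<noteq> x \<Longrightarrow> rank x \<le> rank x' \<Longrightarrow>
                         F x (g(pivot x' := v)) = F x g"
  shows "\<exists>g. (\<forall>y. y \<notin> pivot ` X \<longrightarrow> g y = g0 y) \<and> (\<forall>x\<in>X. F x g = 0)"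
proof -
  have "S \<subseteq> X \<Longrightarrow> \<exists>g. (\<forall>y. y \<notin> pivot ` S \<longrightarrow> g y = g0 y) \<and> (\<forall>x\<in>S. F x g = 0)"
    if "finite S" for S
    using that
  proof (induction S rule: finite_ranking_induct[where f = rank])
    case (insert x S)
    then obtain g where g_off: "\<forall>y. y \<notin> pivot ` S \<longrightarrow> g y = g0 y"
      and g_solves: "\<forall>x\<in>S. F x g = 0"
      by blast
    obtain a b where "a \<noteq> 0" and ab: "\<forall>v. F x (g(pivot x := v)) = a * v + b"
      using affine insert.prems by blast
    define g' where "g' = g(pivot x := - b / a)"
    have "F x g' = 0"
      using ab \<open>a \<noteq> 0\<close> by (simp add: g'_def)
    moreover have "F y g' = 0" if "y \<in> S" for y
    proof (cases "y = x")
      case False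
      then have "F y g' = F y g"
        unfolding g'_def using independent insert that by auto
      then show ?thesis using g_solves that by simp
    qed (use \<open>F x g' = 0\<close> in simp)
    moreover have "\<forall>y. y \<notin> pivot ` insert x S \<longrightarrow> g' y = g0 y"
      using g_off by (simp add: g'_def)
    ultimately show ?case by blast
  qed auto
  then show ?thesis using \<open>finite X\<close> by blast
qed

section \<open>The cube graph\<close>

locale grid =
  fixes d n :: nat
  assumes two_le_d: "2 \<le> d"
begin

abbreviation "D \<equiv> dom_D d n"
abbreviation "Bd \<equiv> bdry_D d n"
abbreviation "V \<equiv> nodes d n"
abbreviation "E \<equiv> edges d n"
abbreviation "N \<equiv> nbrs d n"

lemma d_pos: "0 < d"
  using two_le_d by simp

lemma length_D: "x \<in> D \<Longrightarrow> length x = d"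
  by (simp add: dom_D_def)

lemma length_V: "x \<in> V \<Longrightarrow> length x = d"
  by (auto simp: nodes_def dom_D_def bdry_D_def)

lemma D_bounds: "x \<in> D \<Longrightarrow> i < d \<Longrightarrow> 1 \<le> x ! i \<and> x ! i \<le> int n"
  by (simp add: dom_D_def)

lemma Bd_not_D: "x \<in> Bd \<Longrightarrow> x \<notin> D"
  by (simp add: bdry_D_def)

lemma V_cases: "x \<in> V \<Longrightarrow> (x \<in> D \<Longrightarrow> P) \<Longrightarrow> (x \<in> Bd \<Longrightarrow> P) \<Longrightarrow> P"
  by (auto simp: nodes_def)

lemma shift_in_D_iff:
  assumes "z \<in> D" "i < d"
  shows "shift z i c \<in> D \<longleftrightarrow> 1 \<le> z ! i + c \<and> z ! i + c \<le> int n"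
  using assms by (auto simp: dom_D_def nth_shift)

lemma shift_D_notin_D_imp_Bd:
  assumes "z \<in> D" "i < d" "c \<in> {-1, 1}" "shift z i c \<notin> D"
  shows "shift z i c \<in> Bd"
  using assms l1dist_shift[of i z c] by (auto simp: bdry_D_def length_D)

lemma shift_D_in_V:
  assumes "z \<in> D" "i < d" "c \<in> {-1, 1}"
  shows "shift z i c \<in> V"
  using shift_D_notin_D_imp_Bd[OF assms] by (auto simp: nodes_def)

lemma Bd_imp_shift_of_D:
  assumes "b \<in> Bd"
  obtains z i c where "z \<in> D" "i < d" "c \<in> {-1, 1}" "b = shift z i c"
proof -
  obtain z where z: "z \<in> D" "l1dist z b = 1"
    using assms by (auto simp: bdry_D_def)
  have "length b = length z"
    using assms z by (simp add: bdry_D_def length_D)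
  from l1dist_eq_1_imp_shift[OF this z(2)] show ?thesis
    using that z(1) by (auto simp: length_D)
qed

lemma edge_iff:
  "{x, y} \<in> E \<longleftrightarrow> x \<in> V \<and> y \<in> V \<and> l1dist x y = 1 \<and> \<not> (x \<in> Bd \<and> y \<in> Bd)"
proof
  assume "{x, y} \<in> E"
  then obtain p q where pq: "{x, y} = {p, q}" "p \<in> V" "q \<in> V" "l1dist p q = 1"
    "\<not> (p \<in> Bd \<and> q \<in> Bd)"
    by (auto simp: edges_def)
  then have "l1dist q p = 1"
    using l1dist_commute length_V by metis
  then show "x \<in> V \<and> y \<in> V \<and> l1dist x y = 1 \<and> \<not> (x \<in> Bd \<and> y \<in> Bd)"
    using pq by (auto simp: doubleton_eq_iff)
qed (auto simp: edges_def)

lemma N_iff: "y \<in> N x \<longleftrightarrow> {x, y} \<in> E"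
  by (simp add: nbrs_def)

lemma N_commute: "y \<in> N x \<longleftrightarrow> x \<in> N y"
  by (simp add: nbrs_def insert_commute)

lemma N_subset_V: "y \<in> N x \<Longrightarrow> y \<in> V"
  by (auto simp: N_iff edge_iff)

lemma N_of_Bd_subset_D: "y \<in> N x \<Longrightarrow> x \<in> Bd \<Longrightarrow> y \<in> D"
  by (auto simp: N_iff edge_iff nodes_def)

lemma shift_in_N:
  assumes "z \<in> D" "i < d" "c \<in> {-1, 1}"
  shows "shift z i c \<in> N z"
proof -
  have "l1dist z (shift z i c) = 1"
    using assms l1dist_shift[of i z c] by (auto simp: length_D)
  then show ?thesis
    using assms shift_D_in_V[OF assms] Bd_not_D by (auto simp: N_iff edge_iff nodes_def)
qed

lemma N_imp_shift:
  assumes "y \<in> N x"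
  obtains i c where "i < d" "c \<in> {-1, 1}" "y = shift x i c"
proof -
  have xy: "x \<in> V" "y \<in> V" "l1dist x y = 1"
    using assms by (auto simp: N_iff edge_iff)
  then have "length y = length x"
    by (simp add: length_V)
  from l1dist_eq_1_imp_shift[OF this xy(3)] show ?thesis
    using that length_V[OF xy(1)] by auto
qed

lemma ssum_N: "y \<in> N x \<Longrightarrow> x \<in> V \<Longrightarrow> ssum y = ssum x + 1 \<or> ssum y = ssum x - 1"
  by (elim N_imp_shift) (auto simp: length_V)

lemma finite_V: "finite V"
proof -
  have "set x \<subseteq> {0..int n + 1}" if "x \<in> V" for x
    using that
  proof (rule V_cases)
    assume "x \<in> Bd"
    then obtain z i c where "z \<in> D" "i < d" "c \<in> {-1, 1}" "x = shift z i c"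
      by (rule Bd_imp_shift_of_D)
    then show ?thesis
      using D_bounds[of z] by (force simp: in_set_conv_nth nth_shift length_D)
  qed (force simp: in_set_conv_nth dom_D_def)
  then have "V \<subseteq> {xs. set xs \<subseteq> {0..int n + 1} \<and> length xs = d}"
    using length_V by blast
  moreover have "finite {xs. set xs \<subseteq> {0..int n + 1} \<and> length xs = d}"
    by (rule finite_lists_length_eq) simp
  ultimately show ?thesis by (rule finite_subset)
qed

lemma finite_D: "finite D"
  using finite_V by (rule rev_finite_subset) (auto simp: nodes_def)

lemma finite_N: "finite (N x)"
  using finite_V by (rule rev_finite_subset) (auto dest: N_subset_V)

lemma finite_E: "finite E"
  using finite_V by (rule rev_finite_subset[OF finite_Pow_iff[THEN iffD2]]) (auto simp: edges_def)

text \<open>A neighbour of a boundary node lies in \<open>D\<close>, so its single step has to undo the one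
  coordinate out of range.\<close>

lemma N_of_Bd_unique:
  assumes z: "z \<in> D" "i < d" "c \<in> {-1, 1}" and b: "shift z i c \<in> Bd"
    and y: "y \<in> N (shift z i c)"
  shows "y = z"
proof -
  have "y \<in> D"
    using N_of_Bd_subset_D[OF y b] .
  moreover obtain j c' where jc: "j < d" "c' \<in> {-1, 1}" "y = shift (shift z i c) j c'"
    using N_imp_shift[OF y] by blast
  moreover have "z ! i + c < 1 \<or> int n < z ! i + c"
    using Bd_not_D[OF b] shift_in_D_iff[OF z(1,2), of c] by auto
  ultimately have "j = i \<and> c' = - c"
    using z D_bounds[of y i] D_bounds[of z i] by (auto simp: nth_shift length_D split: if_splits)
  then show ?thesis
    using jc z by (simp add: length_D)
qed

lemma exists_shift_up_in_D:
  assumes "x \<in> D" "ssum x < int d * int n"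
  obtains k where "k < d" "shift x k 1 \<in> D"
proof -
  have "\<exists>k<d. x ! k < int n"
  proof (rule ccontr)
    assume "\<not> (\<exists>k<d. x ! k < int n)"
    then have "(\<Sum>k<d. int n) \<le> (\<Sum>k<d. x ! k)"
      by (intro sum_mono) auto
    also have "\<dots> = ssum x"
      using assms by (simp add: ssum_def sum_list_sum_nth length_D atLeast0LessThan)
    finally show False
      using assms by simp
  qed
  then obtain k where k: "k < d" "x ! k < int n"
    by blast
  then have "shift x k 1 \<in> D"
    using shift_in_D_iff[OF assms(1) k(1)] D_bounds[OF assms(1) k(1)] by simp
  then show ?thesis
    using that k(1) by blast
qed

lemma N_shift_down_same_level:
  assumes "length q = d" "i < d" "y \<in> N (shift q i (-1))" "ssum y = ssum q" "y \<noteq> q"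
  obtains j where "j < d" "j \<noteq> i" "y = shift (shift q i (-1)) j 1"
proof -
  obtain j c where jc: "j < d" "c \<in> {-1, 1}" "y = shift (shift q i (-1)) j c"
    using assms(3) by (rule N_imp_shift)
  then have "c = 1"
    using assms by auto
  moreover have "j \<noteq> i"
    using jc \<open>c = 1\<close> assms by auto
  ultimately show ?thesis
    using that jc by blast
qed

lemma shift_down_in_Kminus:
  assumes "z \<in> D" "i < d" "shift z i (-1) \<notin> D"
  shows "shift z i (-1) \<in> Kminus d n (ssum z - 1)"
proof -
  have zi: "z ! i = 1"
    using assms shift_in_D_iff D_bounds[of z i] by auto
  have "Min (set (shift z i (-1))) = 0"
  proof (rule Min_eqI)
    show "0 \<in> set (shift z i (-1))"
      using assms zi by (auto simp: in_set_conv_nth nth_shift length_D intro!: exI[of _ i])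
    show "0 \<le> v" if "v \<in> set (shift z i (-1))" for v
      using that assms zi D_bounds[of z] by (force simp: in_set_conv_nth nth_shift length_D)
  qed simp
  then show ?thesis
    using assms shift_D_notin_D_imp_Bd[of z i "-1"] by (simp add: Kminus_def length_D)
qed

lemma Kplus_imp_shift_up:
  assumes "b \<in> Kplus d n l"
  obtains z i where "z \<in> D" "i < d" "b = shift z i 1"
proof -
  have b: "b \<in> Bd" "Max (set b) = int n + 1"
    using assms by (auto simp: Kplus_def)
  obtain z i c where zic: "z \<in> D" "i < d" "c \<in> {-1, 1}" "b = shift z i c"
    using b(1) by (rule Bd_imp_shift_of_D)
  have "c = 1"
  proof (rule ccontr)
    assume "c \<noteq> 1"
    then have "\<forall>v\<in>set b. v \<le> int n"
      using zic D_bounds[of z] by (force simp: in_set_conv_nth nth_shift length_D)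
    moreover have "length b = d"
      using zic by (simp add: length_D)
    then have "set b \<noteq> {}"
      using two_le_d by auto
    ultimately have "Max (set b) \<le> int n"
      by simp
    then show False
      using b(2) by simp
  qed
  then show ?thesis
    using that zic by blast
qed

lemma Kplus_unique_N:
  assumes "b \<in> Kplus d n l"
  obtains z where "z \<in> D" "N b = {z}" "ssum z = l - 1"
proof -
  obtain z i where z: "z \<in> D" "i < d" "b = shift z i 1"
    using assms by (rule Kplus_imp_shift_up)
  have "b \<in> Bd"
    using assms by (simp add: Kplus_def)
  then have "N b = {z}"
    using N_of_Bd_unique[of z i 1] shift_in_N[of z i 1] N_commute z by auto
  moreover have "ssum z = l - 1"
    using assms z by (simp add: Kplus_def length_D)
  ultimately show ?thesis
    using that z by blast
qed

end

section \<open>The Dirichlet problem\<close>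

locale network = grid +
  fixes \<gamma> :: "int list set \<Rightarrow> real"
  assumes \<gamma>_pos: "\<forall>e\<in>edges d n. \<gamma> e > 0"
begin

lemma \<gamma>_pos_N: "y \<in> N x \<Longrightarrow> \<gamma> {x, y} > 0"
  using \<gamma>_pos by (simp add: N_iff)

definition laplacian :: "(int list \<Rightarrow> real) \<Rightarrow> int list \<Rightarrow> real" where
  "laplacian u p = (\<Sum>q\<in>N p. \<gamma> {p, q} * (u q - u p))"

lemma is_dirichlet_sol_iff:
  "is_dirichlet_sol d n \<gamma> \<phi> u \<longleftrightarrow>
     (\<forall>p\<in>D. laplacian u p = 0) \<and> (\<forall>p\<in>Bd. u p = \<phi> p) \<and> (\<forall>p. p \<notin> V \<longrightarrow> u p = 0)"
  by (simp add: is_dirichlet_sol_def laplacian_def)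

lemma laplacian_diff: "laplacian (\<lambda>x. u x - v x) p = laplacian u p - laplacian v p"
  unfolding laplacian_def sum_subtractf[symmetric] by (intro sum.cong) (auto simp: algebra_simps)

lemma laplacian_update:
  assumes "y \<in> N x" "y \<noteq> x"
  shows "laplacian (g(y := v)) x = \<gamma> {x, y} * v + (laplacian g x - \<gamma> {x, y} * g y)"
proof -
  have "laplacian (g(y := v)) x - laplacian g x = \<gamma> {x, y} * (v - g y)"
    unfolding laplacian_def sum_subtractf[symmetric]
    using assms finite_N by (subst sum.remove[of _ y]) (auto simp: algebra_simps)
  then show ?thesis by (simp add: algebra_simps)
qed

lemma laplacian_update_nonadjacent:
  "y \<notin> insert x (N x) \<Longrightarrow> laplacian (g(y := v)) x = laplacian g x"
  unfolding laplacian_def by (intro sum.cong) auto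

lemma harmonic_local_max:
  assumes "laplacian h p = 0" "\<forall>y\<in>N p. h y \<le> h p" "y \<in> N p"
  shows "h y = h p"
proof -
  have "\<forall>y\<in>N p. \<gamma> {p, y} * (h p - h y) = 0"
  proof (rule sum_nonneg_eq_0_iff[OF finite_N, THEN iffD1])
    have "(\<Sum>y\<in>N p. \<gamma> {p, y} * (h p - h y)) = - laplacian h p"
      unfolding laplacian_def sum_negf[symmetric] by (rule sum.cong) (auto simp: algebra_simps)
    then show "(\<Sum>y\<in>N p. \<gamma> {p, y} * (h p - h y)) = 0"
      using assms(1) by simp
    show "0 \<le> \<gamma> {p, y} * (h p - h y)" if "y \<in> N p" for y
      using assms(2) \<gamma>_pos_N[OF that] that by (simp add: zero_le_mult_iff)
  qed
  then show ?thesis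
    using assms(3) \<gamma>_pos_N[of y p] by auto
qed

lemma harmonic_max_spreads:
  assumes harmonic: "\<forall>p\<in>D. laplacian h p = 0" and boundary: "\<forall>p\<in>Bd. h p = 0"
    and "x \<in> D" "h x = Max (h ` D)" "0 < h x" "y \<in> N x"
  shows "h y = h x"
proof (rule harmonic_local_max)
  show "\<forall>y\<in>N x. h y \<le> h x"
  proof
    fix y
    assume "y \<in> N x"
    from N_subset_V[OF this] show "h y \<le> h x"
    proof (rule V_cases)
      assume "y \<in> D"
      then show ?thesis using assms(4) finite_D by simp
    qed (use boundary assms(5) in simp)
  qed
qed (use assms in simp_all)

text \<open>Among the maximisers take one with the least first coordinate; stepping down in
  that coordinate leads to another maximiser or to the boundary, a contradiction either way.\<close>

lemma maximum_principle:
  assumes harmonic: "\<forall>p\<in>D. laplacian h p = 0" and boundary: "\<forall>p\<in>Bd. h p = 0"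
    and "p \<in> D"
  shows "h p \<le> 0"
proof (rule ccontr)
  assume "\<not> h p \<le> 0"
  define M where "M = Max (h ` D)"
  have "h p \<le> M"
    unfolding M_def using \<open>p \<in> D\<close> finite_D by simp
  then have "M > 0"
    using \<open>\<not> h p \<le> 0\<close> by simp
  define S where "S = {x\<in>D. h x = M}"
  have "M \<in> h ` D"
    unfolding M_def using finite_D \<open>p \<in> D\<close> by (intro Max_in) auto
  then have "finite S" "S \<noteq> {}"
    unfolding S_def using finite_D by auto
  then obtain x where x: "x \<in> S" and x_min: "\<forall>x'\<in>S. x ! 0 \<le> x' ! 0"
    using ex_is_arg_min_if_finite[of S "\<lambda>x. x ! 0"] by (auto simp: is_arg_min_linorder)
  have xD: "x \<in> D" and hx: "h x = M"
    using x by (auto simp: S_def)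
  define y where "y = shift x 0 (-1)"
  have "y \<in> N x"
    unfolding y_def using shift_in_N[OF xD d_pos] by simp
  then have "h y = M"
    using harmonic_max_spreads[OF harmonic boundary xD] hx \<open>M > 0\<close> by (simp add: M_def)
  show False
  proof (cases "y \<in> D")
    case True
    then have "y \<in> S"
      using \<open>h y = M\<close> by (simp add: S_def)
    moreover have "y ! 0 = x ! 0 - 1"
      unfolding y_def using xD d_pos by (simp add: nth_shift length_D)
    ultimately show False
      using x_min by fastforce
  next
    case False
    then have "y \<in> Bd"
      unfolding y_def using shift_D_notin_D_imp_Bd[OF xD d_pos] by simp
    then show False
      using boundary \<open>h y = M\<close> \<open>M > 0\<close> by simp
  qed
qed

lemma dirichlet_sol_unique:
  assumes u: "is_dirichlet_sol d n \<gamma> \<phi> u" and v: "is_dirichlet_sol d n \<gamma> \<phi> v"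
  shows "u = v"
proof
  have le: "f p - g p \<le> 0"
    if "p \<in> D" "is_dirichlet_sol d n \<gamma> \<phi> f" "is_dirichlet_sol d n \<gamma> \<phi> g" for p f g
    using maximum_principle[of "\<lambda>x. f x - g x" p] that
    by (simp add: is_dirichlet_sol_iff laplacian_diff)
  show "u x = v x" for x
  proof (cases "x \<in> D")
    case True
    then show ?thesis using le[OF True u v] le[OF True v u] by simp
  next
    case False
    then show ?thesis using u v by (cases "x \<in> Bd") (auto simp: is_dirichlet_sol_def nodes_def)
  qed
qed

lemma S_gamma_eqI: "is_dirichlet_sol d n \<gamma> \<phi> u \<Longrightarrow> S_gamma d n \<gamma> \<phi> = u"
  unfolding S_gamma_def by (rule the_equality) (auto intro: dirichlet_sol_unique)

end

section \<open>The levels \<open>t\<close> and \<open>t + 1\<close>\<close>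

locale layers = network +
  fixes t :: int
begin

abbreviation "lower \<equiv> Lset d n t \<union> Kminus d n t"
abbreviation "upper \<equiv> Lset d n (t + 1) \<union> Kplus d n (t + 1)"

lemma ssum_lower: "p \<in> lower \<Longrightarrow> ssum p = t"
  by (auto simp: Lset_def Kminus_def)

lemma ssum_upper: "p \<in> upper \<Longrightarrow> ssum p = t + 1"
  by (auto simp: Lset_def Kplus_def)

lemma L_union_J_eq_lower_upper: "Lset d n t \<union> Lset d n (t + 1) \<union> Jset d n t = lower \<union> upper"
  by (auto simp: Jset_def)

lemma JSset_subset_Bd: "JSset d n t \<subseteq> Bd"
  by (auto simp: JSset_def KSminus_def KSplus_def Kminus_def Kplus_def)

lemma JS_LS_subset_V: "JSset d n t \<union> LSset d n t \<subseteq> V"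
  using JSset_subset_Bd by (auto simp: LSset_def nodes_def)

lemma D_above_notin_JS_LS: "x \<in> D \<Longrightarrow> t < ssum x \<Longrightarrow> x \<notin> JSset d n t \<union> LSset d n t"
  using JSset_subset_Bd Bd_not_D by (auto simp: LSset_def)

lemma L_disjoint_JS_LS: "Lset d n (t + 1) \<inter> (JSset d n t \<union> LSset d n t) = {}"
  using D_above_notin_JS_LS by (auto simp: Lset_def)

lemma harmonic_in_Uset:
  assumes harmonic: "\<forall>x\<in>D. laplacian g x = 0"
    and supp: "\<forall>x. x \<notin> JSset d n t \<union> LSset d n t \<longrightarrow> g x = 0"
  shows "g \<in> Uset d n \<gamma> t"
proof -
  define \<phi> where "\<phi> x = (if x \<in> Bd then g x else 0)" for x
  have S: "S_gamma d n \<gamma> \<phi> = g"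
    by (rule S_gamma_eqI)
      (use harmonic supp JS_LS_subset_V in \<open>auto simp: is_dirichlet_sol_iff \<phi>_def\<close>)
  have "\<phi> \<in> kerT1 d n \<gamma> t"
    using supp L_disjoint_JS_LS Bd_not_D by (auto simp: kerT1_def \<phi>_def S LSset_def)
  moreover have "g = (\<lambda>x. if x \<in> JSset d n t \<union> LSset d n t then S_gamma d n \<gamma> \<phi> x else 0)"
    using supp by (auto simp: S)
  ultimately show ?thesis
    unfolding Uset_def by blast
qed

lemma Uset_zero_on_L: "u \<in> Uset d n \<gamma> t \<Longrightarrow> y \<in> Lset d n (t + 1) \<Longrightarrow> u y = 0"
  using L_disjoint_JS_LS by (auto simp: Uset_def)

lemma shift_down_in_JS_LS:
  assumes "z \<in> D" "i < d" "ssum z \<le> t + 1"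
  shows "shift z i (-1) \<in> JSset d n t \<union> LSset d n t"
proof (cases "shift z i (-1) \<in> D")
  case True
  then show ?thesis
    using assms by (simp add: LSset_def length_D)
next
  case False
  then show ?thesis
    using shift_down_in_Kminus[OF assms(1,2)] assms(3) by (auto simp: JSset_def KSminus_def)
qed

lemma laplacian_zero_above:
  assumes supp: "\<forall>y. y \<notin> JSset d n t \<union> LSset d n t \<longrightarrow> g y = 0"
    and "x \<in> D" "t + 1 < ssum x"
  shows "laplacian g x = 0"
proof -
  have "y \<notin> JSset d n t \<union> LSset d n t" if "y \<in> N x" for y
  proof -
    have "t < ssum y"
      using ssum_N[OF that] assms(2,3) by (auto simp: nodes_def)
    moreover have "y \<notin> Kplus d n l" if "l \<le> t + 1" for l
    proof
      assume "y \<in> Kplus d n l"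
      then obtain z where "N y = {z}" "ssum z = l - 1"
        by (rule Kplus_unique_N)
      then have "x = z"
        using \<open>y \<in> N x\<close> N_commute by auto
      then show False
        using \<open>ssum z = l - 1\<close> assms(3) that by simp
    qed
    ultimately show ?thesis
      unfolding JSset_def KSminus_def KSplus_def LSset_def by (auto simp: Kminus_def)
  qed
  moreover have "x \<notin> JSset d n t \<union> LSset d n t"
    using D_above_notin_JS_LS assms(2,3) by simp
  ultimately show ?thesis
    using supp by (simp add: laplacian_def)
qed

lemma Et_eq: "Et d n t = {e \<in> E. \<exists>p q. e = {p, q} \<and> p \<in> lower \<and> q \<in> upper}"
proof -
  have "\<not> (p \<in> Kminus d n t \<and> q \<in> Kplus d n (t + 1))" if "{p, q} \<in> E" for p q
    using that by (auto simp: edge_iff Kminus_def Kplus_def)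
  then show ?thesis
    unfolding Et_def by blast
qed

lemma finite_Et: "finite (Et d n t)"
  using finite_E by (rule rev_finite_subset) (auto simp: Et_def)

lemma Et_containing_lower:
  assumes "p \<in> lower"
  shows "{e \<in> Et d n t. p \<in> e} = (\<lambda>y. {p, y}) ` (N p \<inter> upper)"
proof -
  have "p \<notin> upper"
    using assms ssum_lower ssum_upper by force
  then show ?thesis
    using assms unfolding Et_eq by (auto simp: N_iff)
qed

lemma Et_containing_upper:
  assumes "q \<in> upper"
  shows "{e \<in> Et d n t. q \<in> e} = (\<lambda>x. {x, q}) ` (N q \<inter> lower)"
proof -
  have "q \<notin> lower"
    using assms ssum_lower ssum_upper by force
  then show ?thesis
    using assms unfolding Et_eq by (auto simp: N_iff insert_commute)
qed

lemma sum_Jvec: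
  "(\<Sum>e\<in>Et d n t. w e * Jvec d n t p u e)
     = (\<Sum>e\<in>{e \<in> Et d n t. p \<in> e}. w e * (u p - u (the_elem (e - {p}))))"
  unfolding sum.inter_filter[OF finite_Et] Jvec_def by (intro sum.cong) auto

lemma sum_Jvec_lower:
  assumes "p \<in> lower"
  shows "(\<Sum>e\<in>Et d n t. w e * Jvec d n t p u e) = (\<Sum>y\<in>N p \<inter> upper. w {p, y} * (u p - u y))"
proof -
  have "p \<notin> upper"
    using assms ssum_lower ssum_upper by force
  then have "inj_on (\<lambda>y. {p, y}) (N p \<inter> upper)" and "y \<in> upper \<Longrightarrow> {p, y} - {p} = {y}" for y
    by (auto simp: inj_on_def doubleton_eq_iff)
  then show ?thesis
    unfolding sum_Jvec Et_containing_lower[OF assms] by (simp add: sum.reindex)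
qed

lemma sum_Jvec_upper:
  assumes "q \<in> upper"
  shows "(\<Sum>e\<in>Et d n t. w e * Jvec d n t q u e) = (\<Sum>x\<in>N q \<inter> lower. w {x, q} * (u q - u x))"
proof -
  have "q \<notin> lower"
    using assms ssum_lower ssum_upper by force
  then have "inj_on (\<lambda>x. {x, q}) (N q \<inter> lower)" and "x \<in> lower \<Longrightarrow> {x, q} - {q} = {x}" for x
    by (auto simp: inj_on_def doubleton_eq_iff)
  then show ?thesis
    unfolding sum_Jvec Et_containing_upper[OF assms] by (simp add: sum.reindex)
qed

end

section \<open>Test functions in \<open>U\<^sup>(\<^sup>t\<^sup>)\<close>\<close>

locale sweep = layers +
  fixes q :: "int list"
  assumes q_L: "q \<in> Lset d n (t + 1)"
begin

lemma q_D: "q \<in> D" and ssum_q: "ssum q = t + 1" and length_q: "length q = d"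
  using q_L by (auto simp: Lset_def length_D)

definition below_q :: "int list set" where
  "below_q = {shift q i (-1) | i. i < d}"

definition unknowns :: "int list set" where
  "unknowns = {x \<in> D. ssum x \<le> t + 1 \<and> x \<noteq> q}"

text \<open>The equation \<open>laplacian u x = 0\<close> at an unknown \<open>x\<close> is solved for the value at
  \<open>pivot x\<close>, a lower neighbour of \<open>x\<close>. Unknowns of level \<open>t + 1\<close> are ranked first, by how far
  their slope lies from that of \<open>q\<close>, deeper ones by decreasing \<open>ssum x + x ! 0\<close>; with this
  ranking the pivot of an unknown enters only its own equation and those of higher rank.\<close>

definition slope :: "int list \<Rightarrow> int" where
  "slope x = x ! 1 - x ! 0"

definition pivot :: "int list \<Rightarrow> int list" where
  "pivot x = (if ssum x = t + 1 \<and> slope x < slope q then shift x 1 (-1) else shift x 0 (-1))"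

definition rank :: "int list \<Rightarrow> int \<times> int" where
  "rank x = (if ssum x = t + 1 then (0, if slope q \<le> slope x then slope x else - slope x)
             else (1, - (ssum x + x ! 0)))"

lemma pivot_cases:
  obtains k where "k < 2" "pivot x = shift x k (-1)"
    "k = 1 \<longleftrightarrow> ssum x = t + 1 \<and> slope x < slope q"
  using that[of 0] that[of 1] by (cases "ssum x = t + 1 \<and> slope x < slope q") (auto simp: pivot_def)

lemma pivot_in_N: "x \<in> D \<Longrightarrow> pivot x \<in> N x"
  using two_le_d by (cases x rule: pivot_cases) (auto intro: shift_in_N)

lemma ssum_pivot: "x \<in> D \<Longrightarrow> ssum (pivot x) = ssum x - 1"
  using two_le_d by (cases x rule: pivot_cases) (simp add: length_D)

lemma pivot_in_JS_LS:
  assumes "x \<in> unknowns"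
  shows "pivot x \<in> JSset d n t \<union> LSset d n t"
proof (cases x rule: pivot_cases)
  case (1 k)
  then show ?thesis
    using shift_down_in_JS_LS[of x k] assms two_le_d by (simp add: unknowns_def)
qed

lemma below_q_subset_N: "below_q \<subseteq> N q"
  using shift_in_N[OF q_D] by (auto simp: below_q_def)

lemma below_q_subset_JS_LS: "below_q \<subseteq> JSset d n t \<union> LSset d n t"
  using shift_down_in_JS_LS[OF q_D] ssum_q by (auto simp: below_q_def)

lemma below_q_subset_lower: "below_q \<subseteq> lower"
proof
  fix y
  assume "y \<in> below_q"
  then obtain i where "i < d" "y = shift q i (-1)"
    by (auto simp: below_q_def)
  then show "y \<in> lower"
    using shift_down_in_Kminus[OF q_D] ssum_q length_q by (cases "y \<in> D") (auto simp: Lset_def)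
qed

lemma N_q_below: "y \<in> N q \<Longrightarrow> ssum y \<le> t \<Longrightarrow> y \<in> below_q"
  by (elim N_imp_shift) (auto simp: below_q_def length_q ssum_q)

lemma rank_pivot_lt:
  assumes x: "x \<in> unknowns" and x': "x' \<in> unknowns" and "x' \<noteq> x"
    and adj: "pivot x' \<in> insert x (N x)"
  shows "rank x' < rank x"
proof -
  have lx: "length x = d"
    using x by (simp add: unknowns_def length_D)
  obtain k where k: "k < 2" "pivot x' = shift x' k (-1)"
    "k = 1 \<longleftrightarrow> ssum x' = t + 1 \<and> slope x' < slope q"
    by (rule pivot_cases)
  obtain j c where jc: "j < d" "c \<in> {-1, 0, 1}" "pivot x' = shift x j c"
  proof (cases "pivot x' = x")
    case True
    then show ?thesis using that[of 0 0] two_le_d by simp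
  next
    case False
    then show ?thesis using adj that by (auto elim: N_imp_shift)
  qed
  have "k < d"
    using k two_le_d by simp
  then have x'_eq: "x' = shift (shift x j c) k 1"
    using k(2) jc(3) x' by (simp add: shift_eq_iff unknowns_def length_D)
  have "\<not> (j = k \<and> c = -1)"
    using x'_eq \<open>x' \<noteq> x\<close> lx \<open>k < d\<close> by auto
  moreover have "ssum x' = ssum x + c + 1"
    using x'_eq jc lx \<open>k < d\<close> by simp
  moreover have "x' ! 0 = x ! 0 + (if j = 0 then c else 0) + (if k = 0 then 1 else 0)"
    and "x' ! 1 = x ! 1 + (if j = 1 then c else 0) + (if k = 1 then 1 else 0)"
    using x'_eq jc lx \<open>k < d\<close> two_le_d by (simp_all add: nth_shift)
  moreover have "ssum x \<le> t + 1" "ssum x' \<le> t + 1"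
    using x x' by (auto simp: unknowns_def)
  moreover have "k = 0 \<or> k = 1" "j = 0 \<or> j = 1 \<or> 2 \<le> j"
    using k by auto
  ultimately show ?thesis
    using k(3) jc(2) unfolding rank_def slope_def by (elim disjE) (auto split: if_splits)
qed

text \<open>On level \<open>t + 1\<close> the pivot points away from \<open>q\<close>, so no pivot has a prescribed value.\<close>

lemma pivot_notin_below_q:
  assumes x: "x \<in> unknowns"
  shows "pivot x \<notin> below_q"
proof
  assume "pivot x \<in> below_q"
  then obtain j where j: "j < d" "pivot x = shift q j (-1)"
    by (auto simp: below_q_def)
  obtain k where k: "k < 2" "pivot x = shift x k (-1)"
    "k = 1 \<longleftrightarrow> ssum x = t + 1 \<and> slope x < slope q"
    by (rule pivot_cases)
  have "k < d"
    using k two_le_d by simp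
  have lx: "length x = d"
    using x by (simp add: unknowns_def length_D)
  have x_eq: "x = shift (shift q j (-1)) k 1"
    using k(2) j(2) \<open>k < d\<close> lx by (simp add: shift_eq_iff)
  have "ssum x = t + 1"
    using x_eq j ssum_q length_q \<open>k < d\<close> by simp
  moreover have "j \<noteq> k"
    using x_eq x length_q \<open>k < d\<close> by (auto simp: unknowns_def)
  moreover have "x ! 0 = q ! 0 + (if j = 0 then -1 else 0) + (if k = 0 then 1 else 0)"
    and "x ! 1 = q ! 1 + (if j = 1 then -1 else 0) + (if k = 1 then 1 else 0)"
    using x_eq j length_q \<open>k < d\<close> two_le_d by (simp_all add: nth_shift)
  moreover have "k = 0 \<or> k = 1" "j = 0 \<or> j = 1 \<or> 2 \<le> j"
    using k by auto
  ultimately show False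
    using k(3) unfolding slope_def by (elim disjE) auto
qed

lemma pivot_notin_prescribed:
  assumes "x \<in> unknowns"
  shows "pivot x \<notin> N q \<union> Kplus d n (t + 1)"
proof -
  have "ssum (pivot x) \<le> t"
    using assms ssum_pivot by (simp add: unknowns_def)
  then show ?thesis
    using N_q_below pivot_notin_below_q[OF assms] ssum_upper[of "pivot x"] by auto
qed

lemma N_q_inter_lower: "N q \<inter> lower = below_q"
proof
  show "N q \<inter> lower \<subseteq> below_q"
    using N_q_below ssum_lower by force
  show "below_q \<subseteq> N q \<inter> lower"
    using below_q_subset_N below_q_subset_lower by blast
qed

lemma finite_unknowns: "finite unknowns"
  using finite_D by (rule rev_finite_subset) (auto simp: unknowns_def)

lemma exists_harmonic_off_pivots:
  obtains g where "\<forall>y. y \<notin> pivot ` unknowns \<longrightarrow> g y = g0 y"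
    "\<forall>x\<in>unknowns. laplacian g x = 0"
proof -
  have "\<exists>g. (\<forall>y. y \<notin> pivot ` unknowns \<longrightarrow> g y = g0 y) \<and> (\<forall>x\<in>unknowns. laplacian g x = 0)"
  proof (rule triangular_system_solvable[where rank = rank])
    show "\<exists>a b. a \<noteq> 0 \<and> (\<forall>v. laplacian (g(pivot x := v)) x = a * v + b)"
      if "x \<in> unknowns" for x g
    proof -
      have "x \<in> D"
        using that by (simp add: unknowns_def)
      then have nbr: "pivot x \<in> N x" "pivot x \<noteq> x"
        using pivot_in_N ssum_pivot by force+
      have "\<gamma> {x, pivot x} \<noteq> 0"
        using \<gamma>_pos_N[OF nbr(1)] by simp
      with laplacian_update[OF nbr] show ?thesis
        by blast
    qed
    show "laplacian (g(pivot x' := v)) x = laplacian g x"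
      if "x \<in> unknowns" "x' \<in> unknowns" "x' \<noteq> x" "rank x \<le> rank x'" for x x' g v
    proof (rule laplacian_update_nonadjacent)
      show "pivot x' \<notin> insert x (N x)"
        using rank_pivot_lt[OF that(1-3)] that(4) by (meson leD)
    qed
  qed (rule finite_unknowns)
  then show ?thesis
    using that by blast
qed

lemma off_pivots_vanishes_off_JS_LS:
  assumes off: "\<forall>y. y \<notin> pivot ` unknowns \<longrightarrow> g y = g0 y"
    and supp: "\<forall>y. y \<notin> below_q \<union> Kplus d n (t + 1) \<longrightarrow> g0 y = 0"
  shows "\<forall>y. y \<notin> JSset d n t \<union> LSset d n t \<longrightarrow> g y = 0"
proof (intro allI impI)
  fix y
  assume y: "y \<notin> JSset d n t \<union> LSset d n t"
  have "below_q \<union> Kplus d n (t + 1) \<subseteq> JSset d n t \<union> LSset d n t"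
    using below_q_subset_JS_LS by (auto simp: JSset_def KSplus_def)
  then have "g0 y = 0"
    using y supp by (auto simp del: Un_iff)
  moreover have "y \<notin> pivot ` unknowns"
    using y pivot_in_JS_LS by (auto simp del: Un_iff)
  ultimately show "g y = 0"
    using off by simp
qed

lemma exists_U_extension:
  assumes supp: "\<forall>y. y \<notin> below_q \<union> Kplus d n (t + 1) \<longrightarrow> g0 y = 0"
    and balanced: "(\<Sum>y\<in>N q. \<gamma> {q, y} * g0 y) = 0"
  obtains u where "u \<in> Uset d n \<gamma> t" "\<forall>y\<in>below_q \<union> Kplus d n (t + 1). u y = g0 y"
proof -
  obtain g where g_off: "\<forall>y. y \<notin> pivot ` unknowns \<longrightarrow> g y = g0 y"
    and harmonic: "\<forall>x\<in>unknowns. laplacian g x = 0"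
    by (rule exists_harmonic_off_pivots)
  have g_eq: "g y = g0 y" if "y \<in> N q \<union> Kplus d n (t + 1)" for y
  proof -
    have "y \<notin> pivot ` unknowns"
      using that pivot_notin_prescribed by (auto simp del: Un_iff)
    then show ?thesis
      using g_off by simp
  qed
  have g_supp: "\<forall>y. y \<notin> JSset d n t \<union> LSset d n t \<longrightarrow> g y = 0"
    using g_off supp by (rule off_pivots_vanishes_off_JS_LS)
  have "laplacian g x = 0" if "x \<in> D" for x
  proof -
    consider "x \<in> unknowns" | "x = q" | "t + 1 < ssum x"
      using \<open>x \<in> D\<close> by (cases "x = q"; cases "ssum x \<le> t + 1") (auto simp: unknowns_def)
    then show ?thesis
    proof cases
      case 2
      have "g q = 0"
        using g_supp D_above_notin_JS_LS q_D ssum_q by simp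
      then have "laplacian g q = (\<Sum>y\<in>N q. \<gamma> {q, y} * g0 y)"
        unfolding laplacian_def using g_eq by (intro sum.cong) simp_all
      then show ?thesis
        using balanced 2 by simp
    qed (use harmonic laplacian_zero_above[OF g_supp \<open>x \<in> D\<close>] in simp_all)
  qed
  then have "g \<in> Uset d n \<gamma> t"
    using g_supp by (intro harmonic_in_Uset) auto
  moreover have "\<forall>y\<in>below_q \<union> Kplus d n (t + 1). g y = g0 y"
    using g_eq below_q_subset_N by blast
  ultimately show ?thesis
    by (rule that)
qed

lemma exists_U_unit_at_Kplus:
  assumes b: "b \<in> Kplus d n (t + 1)"
  obtains u where "u \<in> Uset d n \<gamma> t" "u b = 1" "\<forall>y\<in>below_q. u y = 0"
proof -
  define g0 where "g0 y = (if y = b then 1 else 0 :: real)" for y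
  have "b \<notin> below_q"
    using b below_q_subset_lower ssum_lower ssum_upper by force
  have "g0 y = 0" if "y \<in> N q" for y
  proof -
    have "q \<in> V"
      using q_D by (simp add: nodes_def)
    then have "ssum y \<noteq> ssum b"
      using ssum_N[OF that] ssum_q ssum_upper[of b] b by auto
    then show ?thesis
      by (auto simp: g0_def)
  qed
  then have balanced: "(\<Sum>y\<in>N q. \<gamma> {q, y} * g0 y) = 0"
    by simp
  have supp: "\<forall>y. y \<notin> below_q \<union> Kplus d n (t + 1) \<longrightarrow> g0 y = 0"
    using b by (simp add: g0_def)
  obtain u where u: "u \<in> Uset d n \<gamma> t" "\<forall>y\<in>below_q \<union> Kplus d n (t + 1). u y = g0 y"
    using supp balanced by (rule exists_U_extension)
  have "u b = 1" "\<forall>y\<in>below_q. u y = 0"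
    using u(2) b \<open>b \<notin> below_q\<close> by (auto simp: g0_def)
  then show ?thesis
    using that u(1) by blast
qed

lemma exists_U_dipole:
  assumes "i < d" "j < d" "i \<noteq> j"
  obtains u where "u \<in> Uset d n \<gamma> t"
    "u (shift q i (-1)) = \<gamma> {q, shift q j (-1)}" "u (shift q j (-1)) = - \<gamma> {q, shift q i (-1)}"
    "\<forall>y\<in>below_q \<union> Kplus d n (t + 1). y \<noteq> shift q i (-1) \<longrightarrow> y \<noteq> shift q j (-1) \<longrightarrow> u y = 0"
proof -
  define x0 where "x0 = shift q i (-1)"
  define x1 where "x1 = shift q j (-1)"
  have "x0 \<noteq> x1"
    using assms length_q by (auto simp: x0_def x1_def shift_def dest: arg_cong[where f = "\<lambda>x. x ! i"])
  have x01: "x0 \<in> below_q" "x1 \<in> below_q"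
    using assms by (auto simp: below_q_def x0_def x1_def)
  define g0 where "g0 y = (if y = x0 then \<gamma> {q, x1} else if y = x1 then - \<gamma> {q, x0} else 0)" for y
  have "(\<Sum>y\<in>N q. \<gamma> {q, y} * g0 y) = (\<Sum>y\<in>{x0, x1}. \<gamma> {q, y} * g0 y)"
    using x01 below_q_subset_N finite_N by (intro sum.mono_neutral_right) (auto simp: g0_def)
  also have "\<dots> = 0"
    using \<open>x0 \<noteq> x1\<close> by (simp add: g0_def)
  finally have balanced: "(\<Sum>y\<in>N q. \<gamma> {q, y} * g0 y) = 0" .
  have supp: "\<forall>y. y \<notin> below_q \<union> Kplus d n (t + 1) \<longrightarrow> g0 y = 0"
    using x01 by (auto simp: g0_def)
  obtain u where u: "u \<in> Uset d n \<gamma> t" "\<forall>y\<in>below_q \<union> Kplus d n (t + 1). u y = g0 y"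
    using supp balanced by (rule exists_U_extension)
  have "u x0 = \<gamma> {q, x1}" "u x1 = - \<gamma> {q, x0}"
    using u(2) x01 \<open>x0 \<noteq> x1\<close> by (simp_all add: g0_def)
  moreover have "\<forall>y\<in>below_q \<union> Kplus d n (t + 1). y \<noteq> x0 \<longrightarrow> y \<noteq> x1 \<longrightarrow> u y = 0"
    using u(2) by (simp add: g0_def)
  ultimately show ?thesis
    using that[OF u(1)] unfolding x0_def x1_def by blast
qed

end

section \<open>Vectors orthogonal to all \<open>J\<^sub>p\<^sup>u\<close>\<close>

context layers
begin

context
  fixes w :: "int list set \<Rightarrow> real"
  assumes t_le: "t \<le> int d * int n - 1"
    and orth: "\<And>u p. u \<in> Uset d n \<gamma> t \<Longrightarrow> p \<in> lower \<union> upper \<Longrightarrow>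
                 (\<Sum>e\<in>Et d n t. w e * Jvec d n t p u e) = 0"
begin

lemma w_Kplus_edge_zero:
  assumes b: "b \<in> Kplus d n (t + 1)" and x: "x \<in> N b"
  shows "w {x, b} = 0"
proof -
  obtain z where z: "z \<in> D" "N b = {z}" "ssum z = t"
    using b by (rule Kplus_unique_N) simp
  have "ssum z < int d * int n"
    using z(3) t_le by simp
  then obtain k where k: "k < d" "shift z k 1 \<in> D"
    by (rule exists_shift_up_in_D[OF z(1)])
  define q where "q = shift z k 1"
  have "q \<in> Lset d n (t + 1)"
    using z k by (simp add: Lset_def q_def length_D)
  then interpret sweep d n \<gamma> t q
    by unfold_locales
  have "z = shift q k (-1)"
    using k z by (simp add: q_def length_D)
  then have "z \<in> below_q"
    unfolding below_q_def using k(1) by blast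
  obtain u where u: "u \<in> Uset d n \<gamma> t" "u b = 1" "\<forall>y\<in>below_q. u y = 0"
    using b by (rule exists_U_unit_at_Kplus)
  have "z \<in> lower"
    using z by (simp add: Lset_def)
  have "(\<Sum>e\<in>Et d n t. w e * Jvec d n t b u e) = 0"
    using orth[OF u(1)] b by blast
  then have "(\<Sum>x\<in>N b \<inter> lower. w {x, b} * (u b - u x)) = 0"
    using b by (simp add: sum_Jvec_upper)
  moreover have "N b \<inter> lower = {z}"
    using z(2) \<open>z \<in> lower\<close> by blast
  ultimately show ?thesis
    using u(2,3) \<open>z \<in> below_q\<close> x z(2) by simp
qed

lemma w_ratio:
  assumes q: "q \<in> Lset d n (t + 1)" and "i < d" "j < d" "i \<noteq> j"
  shows "w {shift q i (-1), q} * \<gamma> {q, shift q j (-1)} = w {shift q j (-1), q} * \<gamma> {q, shift q i (-1)}"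
proof -
  interpret sweep d n \<gamma> t q
    by unfold_locales (fact q)
  define x0 where "x0 = shift q i (-1)"
  define x1 where "x1 = shift q j (-1)"
  obtain u where u: "u \<in> Uset d n \<gamma> t" "u x0 = \<gamma> {q, x1}" "u x1 = - \<gamma> {q, x0}"
    "\<forall>y\<in>below_q \<union> Kplus d n (t + 1). y \<noteq> x0 \<longrightarrow> y \<noteq> x1 \<longrightarrow> u y = 0"
    unfolding x0_def x1_def using assms(2-4) by (rule exists_U_dipole)
  have "x0 \<noteq> x1"
    using assms length_q by (auto simp: x0_def x1_def shift_def dest: arg_cong[where f = "\<lambda>x. x ! i"])
  have x01: "x0 \<in> below_q" "x1 \<in> below_q"
    using assms by (auto simp: below_q_def x0_def x1_def)
  have "u q = 0"
    using Uset_zero_on_L[OF u(1) q] .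
  have "0 = (\<Sum>e\<in>Et d n t. w e * Jvec d n t q u e)"
    using orth[OF u(1)] q by simp
  also have "\<dots> = (\<Sum>x\<in>below_q. w {x, q} * (u q - u x))"
    using q N_q_inter_lower by (simp add: sum_Jvec_upper)
  also have "\<dots> = (\<Sum>x\<in>{x0, x1}. w {x, q} * (u q - u x))"
    using x01 u(4) \<open>u q = 0\<close> finite_subset[OF below_q_subset_N finite_N]
    by (intro sum.mono_neutral_right) auto
  also have "\<dots> = w {x1, q} * \<gamma> {q, x0} - w {x0, q} * \<gamma> {q, x1}"
    using \<open>x0 \<noteq> x1\<close> \<open>u q = 0\<close> u(2,3) by simp
  finally show ?thesis
    unfolding x0_def x1_def by simp
qed

lemma w_sum_upper_zero:
  assumes q: "q \<in> Lset d n (t + 1)" and "i < d"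
  shows "(\<Sum>y\<in>N (shift q i (-1)) \<inter> upper. w {shift q i (-1), y}) = 0"
proof -
  interpret sweep d n \<gamma> t q
    by unfold_locales (fact q)
  define j where "j = (if i = 0 then 1 else 0 :: nat)"
  have "j < d" "i \<noteq> j"
    using two_le_d by (auto simp: j_def)
  define x0 where "x0 = shift q i (-1)"
  obtain u where u: "u \<in> Uset d n \<gamma> t" "u x0 = \<gamma> {q, shift q j (-1)}"
    unfolding x0_def using \<open>i < d\<close> \<open>j < d\<close> \<open>i \<noteq> j\<close> by (rule exists_U_dipole)
  have "x0 \<in> lower"
    using below_q_subset_lower \<open>i < d\<close> by (auto simp: below_q_def x0_def)
  have term_eq: "w {x0, y} * (u x0 - u y) = w {x0, y} * u x0" if "y \<in> N x0 \<inter> upper" for y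
  proof (cases "y \<in> Kplus d n (t + 1)")
    case True
    then have "w {x0, y} = 0"
      using that N_commute w_Kplus_edge_zero by blast
    then show ?thesis by simp
  qed (use that Uset_zero_on_L[OF u(1)] in auto)
  have "(\<Sum>e\<in>Et d n t. w e * Jvec d n t x0 u e) = 0"
    using orth[OF u(1)] \<open>x0 \<in> lower\<close> by blast
  then have "0 = (\<Sum>y\<in>N x0 \<inter> upper. w {x0, y} * (u x0 - u y))"
    unfolding sum_Jvec_lower[OF \<open>x0 \<in> lower\<close>] by simp
  also have "\<dots> = (\<Sum>y\<in>N x0 \<inter> upper. w {x0, y}) * u x0"
    unfolding sum_distrib_right using term_eq by (rule sum.cong[OF refl])
  moreover have "u x0 > 0"
    using u(2) \<gamma>_pos_N shift_in_N[OF q_D \<open>j < d\<close>] by simp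
  ultimately show ?thesis
    unfolding x0_def by simp
qed

lemma w_edge_zero_of_edge_0:
  assumes q: "q \<in> Lset d n (t + 1)" and "j < d" and edge_0: "w {shift q 0 (-1), q} = 0"
  shows "w {shift q j (-1), q} = 0"
proof (cases "j = 0")
  case False
  have "\<gamma> {q, shift q 0 (-1)} > 0"
    using \<gamma>_pos_N shift_in_N[of q 0 "-1"] q d_pos by (simp add: Lset_def)
  then show ?thesis
    using w_ratio[OF q d_pos \<open>j < d\<close>] edge_0 False by simp
qed (use edge_0 in simp)

text \<open>Induction on the first coordinate: the upper neighbours of \<open>q - e\<^sub>0\<close> other than \<open>q\<close>
  are the nodes \<open>q - e\<^sub>0 + e\<^sub>j\<close>, whose first coordinate is smaller.\<close>

lemma w_edge_0_zero:
  "q \<in> Lset d n (t + 1) \<Longrightarrow> w {shift q 0 (-1), q} = 0"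
proof (induction "nat (q ! 0)" arbitrary: q rule: less_induct)
  case less
  have q: "q \<in> D" "length q = d" "ssum q = t + 1"
    using less.prems by (auto simp: Lset_def length_D)
  define x0 where "x0 = shift q 0 (-1)"
  have "w {x0, y} = 0" if y: "y \<in> N x0 \<inter> upper" "y \<noteq> q" for y
  proof (cases "y \<in> Kplus d n (t + 1)")
    case True
    then show ?thesis
      using y N_commute w_Kplus_edge_zero by blast
  next
    case False
    then have yL: "y \<in> Lset d n (t + 1)"
      using y by simp
    have "y \<in> N (shift q 0 (-1))" "ssum y = ssum q"
      using y ssum_upper q(3) by (auto simp: x0_def)
    then obtain j where j: "j < d" "j \<noteq> 0" "y = shift x0 j 1"
      unfolding x0_def by (rule N_shift_down_same_level[OF q(2) d_pos _ _ y(2)])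
    have "y ! 0 = q ! 0 - 1" "1 \<le> y ! 0"
      using j q d_pos D_bounds[of y 0] yL by (auto simp: x0_def nth_shift Lset_def)
    then have "w {shift y 0 (-1), y} = 0"
      using less.hyps yL by simp
    then have "w {shift y j (-1), y} = 0"
      by (rule w_edge_zero_of_edge_0[OF yL j(1)])
    moreover have "shift y j (-1) = x0"
      using j q by (simp add: x0_def)
    ultimately show ?thesis
      by (simp add: insert_commute)
  qed
  then have "(\<Sum>y\<in>N x0 \<inter> upper - {q}. w {x0, y}) = 0"
    by (intro sum.neutral) blast
  moreover have "q \<in> N x0 \<inter> upper"
    using N_commute shift_in_N[OF q(1) d_pos] less.prems by (simp add: x0_def)
  then have "(\<Sum>y\<in>N x0 \<inter> upper. w {x0, y}) = w {x0, q} + (\<Sum>y\<in>N x0 \<inter> upper - {q}. w {x0, y})"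
    using finite_N by (simp add: sum.remove)
  ultimately show ?case
    using w_sum_upper_zero[OF less.prems d_pos] by (simp add: x0_def)
qed

lemma w_zero_on_Et:
  assumes "e \<in> Et d n t"
  shows "w e = 0"
proof -
  obtain p y where e: "{p, y} \<in> E" "e = {p, y}" "p \<in> lower" "y \<in> upper"
    using assms unfolding Et_eq by blast
  then have "p \<in> N y"
    by (simp add: N_iff insert_commute)
  show ?thesis
  proof (cases "y \<in> Kplus d n (t + 1)")
    case True
    then show ?thesis
      using w_Kplus_edge_zero \<open>p \<in> N y\<close> e(2) by simp
  next
    case False
    then have yL: "y \<in> Lset d n (t + 1)"
      using e(4) by simp
    obtain j c where jc: "j < d" "c \<in> {-1, 1}" "p = shift y j c"
      using \<open>p \<in> N y\<close> by (rule N_imp_shift)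
    have "c = -1"
      using jc ssum_lower[OF e(3)] ssum_upper[OF e(4)] yL by (auto simp: Lset_def length_D)
    then show ?thesis
      using w_edge_zero_of_edge_0[OF yL jc(1) w_edge_0_zero[OF yL]] jc e(2) by simp
  qed
qed

end

end

theorem theorem4p2:
  fixes d n :: nat and t :: int and \<gamma> :: "int list set \<Rightarrow> real"
    and w :: "int list set \<Rightarrow> real"
  assumes "d \<ge> 2" and "n \<ge> 1"
    and "\<forall>e\<in>edges d n. \<gamma> e > 0"
    and "int d - 1 \<le> t" and "t \<le> int d * int n - 1"
    and "\<forall>u\<in>Uset d n \<gamma> t. \<forall>p\<in>Lset d n t \<union> Lset d n (t + 1) \<union> Jset d n t.
           (\<Sum>e\<in>Et d n t. w e * Jvec d n t p u e) = 0"
  shows "\<forall>e\<in>Et d n t. w e = 0"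
proof -
  interpret layers d n \<gamma> t
    by unfold_locales (use assms in auto)
  show ?thesis
    using w_zero_on_Et[of w] assms(5,6) L_union_J_eq_lower_upper by blast
qed

end
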